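(* The distribution $p\in\Delta_7$ with $p_{001}=p_{010}=p_{100}=\tfrac13$ and all other entries $0$ lies in $\mathcal{M}_{3,3}$ and in the closure $\overline{\operatorname{RBM}_{3,2}}$, but not in $\operatorname{RBM}_{3,2}$. In particular $\operatorname{RBM}_{3,2}$ is not a closed subset of $\Delta_7$.
   Context: A distribution of three binary random variables is a $2\times2\times2$ tensor $p=(p_{ijk})_{i,j,k\in\{0,1\}}$ with nonnegative entries summing to $1$; the set of these is $\Delta_7$. For $a,b,c\in\mathbb{R}^2_{\ge0}$, $a\otimes b\otimes c$ is the tensor with entries $a_ib_jc_k$. $\mathcal{M}_{3,3}$ is the set of $p\in\Delta_7$ that are a sum of three tensors of the form $a\otimes b\otimes c$ with $a,b,c\in\mathbb{R}^2_{\ge0}$. $\operatorname{RBM}_{3,2}$ is the set of $p\in\Delta_7$ of the form $p=(a_1\otimes b_1\otimes c_1+d_1\otimes e_1\otimes f_1)*(a_2\otimes b_2\otimes c_2+d_2\otimes e_2\otimes f_2)$ with all vectors in $\mathbb{R}^2_{\ge0}$, where $*$ is the entrywise (Hadamard) product. *)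

theory Defs
  imports "HOL-Analysis.Analysis"
begin

text \<open>Binary index 0/1 is encoded as False/True.
  The topology on tensors is the product topology on the function type
  (Function_Topology), i.e. the Euclidean topology on R^8.\<close>

type_synonym tensor3 = "bool \<Rightarrow> bool \<Rightarrow> bool \<Rightarrow> real"

definition nonneg2 :: "(bool \<Rightarrow> real) \<Rightarrow> bool" where
  "nonneg2 a \<longleftrightarrow> (\<forall>i. 0 \<le> a i)"

definition tprod3 :: "(bool \<Rightarrow> real) \<Rightarrow> (bool \<Rightarrow> real) \<Rightarrow> (bool \<Rightarrow> real) \<Rightarrow> tensor3" where
  "tprod3 a b c = (\<lambda>i j k. a i * b j * c k)"

definition Delta7 :: "tensor3 set" where
  "Delta7 = {p. (\<forall>i j k. 0 \<le> p i j k) \<and> (\<Sum>i\<in>UNIV. \<Sum>j\<in>UNIV. \<Sum>k\<in>UNIV. p i j k) = 1}"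

definition M33 :: "tensor3 set" where
  "M33 = {p \<in> Delta7. \<exists>a1 b1 c1 a2 b2 c2 a3 b3 c3.
      nonneg2 a1 \<and> nonneg2 b1 \<and> nonneg2 c1 \<and>
      nonneg2 a2 \<and> nonneg2 b2 \<and> nonneg2 c2 \<and>
      nonneg2 a3 \<and> nonneg2 b3 \<and> nonneg2 c3 \<and>
      p = (\<lambda>i j k. tprod3 a1 b1 c1 i j k + tprod3 a2 b2 c2 i j k + tprod3 a3 b3 c3 i j k)}"

definition RBM32 :: "tensor3 set" where
  "RBM32 = {p \<in> Delta7. \<exists>a1 b1 c1 d1 e1 f1 a2 b2 c2 d2 e2 f2.
      nonneg2 a1 \<and> nonneg2 b1 \<and> nonneg2 c1 \<and>
      nonneg2 d1 \<and> nonneg2 e1 \<and> nonneg2 f1 \<and>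
      nonneg2 a2 \<and> nonneg2 b2 \<and> nonneg2 c2 \<and>
      nonneg2 d2 \<and> nonneg2 e2 \<and> nonneg2 f2 \<and>
      p = (\<lambda>i j k. (tprod3 a1 b1 c1 i j k + tprod3 d1 e1 f1 i j k) *
                    (tprod3 a2 b2 c2 i j k + tprod3 d2 e2 f2 i j k))}"

definition pW :: tensor3 where
  "pW = (\<lambda>i j k. if (i \<and> \<not> j \<and> \<not> k) \<or> (\<not> i \<and> j \<and> \<not> k) \<or> (\<not> i \<and> \<not> j \<and> k)
                 then 1/3 else 0)"

end

theory Submission
  imports Defs
begin

text \<open>
  Membership of \<open>pW\<close> in \<open>M33\<close> is witnessed by its three nonzero entries. It is not in
  \<open>RBM32\<close>: since \<open>pW\<close> vanishes at 000, one of the two Hadamard factors does, i.e. both of its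
  nonnegative rank-one summands do; a rank-one tensor vanishing at 000 vanishes at two of
  100, 010, 001, so the two summands share a common zero there and \<open>pW\<close> would vanish at one of
  its support points. Finally \<open>pW\<close> is the limit for \<open>x \<rightarrow> 0\<^sup>+\<close> of the normalized sum of four
  monomials in \<open>x\<close>, which for \<open>x > 0\<close> factors as a product of two sums of two rank-one tensors.
\<close>

definition tensor_mass :: "tensor3 \<Rightarrow> real" where
  "tensor_mass p = (\<Sum>i\<in>UNIV. \<Sum>j\<in>UNIV. \<Sum>k\<in>UNIV. p i j k)"

definition normalize_tensor :: "tensor3 \<Rightarrow> tensor3" where
  "normalize_tensor p = (\<lambda>i j k. p i j k / tensor_mass p)"

lemma Delta7_iff: "p \<in> Delta7 \<longleftrightarrow> (\<forall>i j k. 0 \<le> p i j k) \<and> tensor_mass p = 1"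
  by (simp add: Delta7_def tensor_mass_def)

lemma tensor_mass_ge_entry:
  assumes "\<And>i j k. 0 \<le> p i j k"
  shows "p i j k \<le> tensor_mass p"
  using assms by (cases i; cases j; cases k) (simp_all add: tensor_mass_def UNIV_bool)

lemma normalize_tensor_in_Delta7:
  assumes nonneg: "\<And>i j k. 0 \<le> p i j k" and pos: "0 < tensor_mass p"
  shows "normalize_tensor p \<in> Delta7"
proof -
  have "tensor_mass (normalize_tensor p) = tensor_mass p / tensor_mass p"
    by (simp only: tensor_mass_def normalize_tensor_def sum_divide_distrib)
  moreover have "0 \<le> normalize_tensor p i j k" for i j k
    using nonneg pos by (simp add: normalize_tensor_def)
  ultimately show ?thesis
    using pos by (simp add: Delta7_iff)
qed

lemma tprod3_nonneg: "nonneg2 a \<Longrightarrow> nonneg2 b \<Longrightarrow> nonneg2 c \<Longrightarrow> 0 \<le> tprod3 a b c i j k"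
  by (simp add: tprod3_def nonneg2_def)

lemma tprod3_scale: "tprod3 (\<lambda>i. s * a i) b c i j k = s * tprod3 a b c i j k"
  by (simp add: tprod3_def)

lemma RBM32I:
  assumes "p = (\<lambda>i j k. (tprod3 a1 b1 c1 i j k + tprod3 d1 e1 f1 i j k) *
                        (tprod3 a2 b2 c2 i j k + tprod3 d2 e2 f2 i j k))"
    and "p \<in> Delta7"
    and "nonneg2 a1" "nonneg2 b1" "nonneg2 c1" "nonneg2 d1" "nonneg2 e1" "nonneg2 f1"
    and "nonneg2 a2" "nonneg2 b2" "nonneg2 c2" "nonneg2 d2" "nonneg2 e2" "nonneg2 f2"
  shows "p \<in> RBM32"
  unfolding RBM32_def mem_Collect_eq
  apply (rule conjI[OF assms(2)])
  apply (rule exI[of _ a1], rule exI[of _ b1], rule exI[of _ c1], rule exI[of _ d1],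
      rule exI[of _ e1], rule exI[of _ f1], rule exI[of _ a2], rule exI[of _ b2],
      rule exI[of _ c2], rule exI[of _ d2], rule exI[of _ e2], rule exI[of _ f2])
  using assms by (intro conjI)

lemma RBM32E:
  assumes "p \<in> RBM32"
  obtains a1 b1 c1 d1 e1 f1 a2 b2 c2 d2 e2 f2 where
    "p = (\<lambda>i j k. (tprod3 a1 b1 c1 i j k + tprod3 d1 e1 f1 i j k) *
                    (tprod3 a2 b2 c2 i j k + tprod3 d2 e2 f2 i j k))"
    "nonneg2 a1" "nonneg2 b1" "nonneg2 c1" "nonneg2 d1" "nonneg2 e1" "nonneg2 f1"
    "nonneg2 a2" "nonneg2 b2" "nonneg2 c2" "nonneg2 d2" "nonneg2 e2" "nonneg2 f2"
  using assms unfolding RBM32_def by (elim CollectE conjE exE) (rule that)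

lemma normalize_product_in_RBM32:
  assumes "nonneg2 a1" "nonneg2 b1" "nonneg2 c1" "nonneg2 d1" "nonneg2 e1" "nonneg2 f1"
    and "nonneg2 a2" "nonneg2 b2" "nonneg2 c2" "nonneg2 d2" "nonneg2 e2" "nonneg2 f2"
    and p: "\<And>i j k. p i j k = (tprod3 a1 b1 c1 i j k + tprod3 d1 e1 f1 i j k) *
                                (tprod3 a2 b2 c2 i j k + tprod3 d2 e2 f2 i j k)"
    and pos: "0 < tensor_mass p"
  shows "normalize_tensor p \<in> RBM32"
proof -
  define s where "s = 1 / tensor_mass p"
  have eq: "normalize_tensor p =
      (\<lambda>i j k. (tprod3 (\<lambda>i. s * a1 i) b1 c1 i j k + tprod3 (\<lambda>i. s * d1 i) e1 f1 i j k) *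
               (tprod3 a2 b2 c2 i j k + tprod3 d2 e2 f2 i j k))"
  proof (intro ext)
    fix i j k
    have "normalize_tensor p i j k = s * p i j k"
      by (simp add: normalize_tensor_def s_def)
    then show "normalize_tensor p i j k =
        (tprod3 (\<lambda>i. s * a1 i) b1 c1 i j k + tprod3 (\<lambda>i. s * d1 i) e1 f1 i j k) *
        (tprod3 a2 b2 c2 i j k + tprod3 d2 e2 f2 i j k)"
      by (simp add: p tprod3_scale algebra_simps)
  qed
  have "normalize_tensor p \<in> Delta7"
    using assms by (intro normalize_tensor_in_Delta7) (simp_all add: tprod3_nonneg)
  moreover have "nonneg2 (\<lambda>i. s * a1 i)" "nonneg2 (\<lambda>i. s * d1 i)"
    using assms(1,4) pos by (simp_all add: nonneg2_def s_def)
  ultimately show ?thesis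
    using assms(2,3,5-12) by (intro RBM32I[OF eq])
qed

lemma tprod3_zero_neighbours:
  assumes "tprod3 a b c i j k = 0"
  shows "tprod3 a b c (\<not> i) j k = 0 \<and> tprod3 a b c i (\<not> j) k = 0
       \<or> tprod3 a b c (\<not> i) j k = 0 \<and> tprod3 a b c i j (\<not> k) = 0
       \<or> tprod3 a b c i (\<not> j) k = 0 \<and> tprod3 a b c i j (\<not> k) = 0"
  using assms by (auto simp: tprod3_def)

lemma rank2_zero_neighbour:
  assumes "nonneg2 a" "nonneg2 b" "nonneg2 c" "nonneg2 d" "nonneg2 e" "nonneg2 f"
    and "tprod3 a b c i j k + tprod3 d e f i j k = 0"
  shows "tprod3 a b c (\<not> i) j k + tprod3 d e f (\<not> i) j k = 0
       \<or> tprod3 a b c i (\<not> j) k + tprod3 d e f i (\<not> j) k = 0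
       \<or> tprod3 a b c i j (\<not> k) + tprod3 d e f i j (\<not> k) = 0"
proof -
  have "tprod3 a b c i j k = 0" "tprod3 d e f i j k = 0"
    using assms tprod3_nonneg[of a b c i j k] tprod3_nonneg[of d e f i j k] by linarith+
  from this[THEN tprod3_zero_neighbours] show ?thesis
    by auto
qed

lemma RBM32_zero_neighbour:
  assumes "p \<in> RBM32" and "p i j k = 0"
  shows "p (\<not> i) j k = 0 \<or> p i (\<not> j) k = 0 \<or> p i j (\<not> k) = 0"
  using assms(1)
proof (rule RBM32E)
  fix a1 b1 c1 d1 e1 f1 a2 b2 c2 d2 e2 f2
  assume p: "p = (\<lambda>i j k. (tprod3 a1 b1 c1 i j k + tprod3 d1 e1 f1 i j k) *
                        (tprod3 a2 b2 c2 i j k + tprod3 d2 e2 f2 i j k))"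
    and nn: "nonneg2 a1" "nonneg2 b1" "nonneg2 c1" "nonneg2 d1" "nonneg2 e1" "nonneg2 f1"
      "nonneg2 a2" "nonneg2 b2" "nonneg2 c2" "nonneg2 d2" "nonneg2 e2" "nonneg2 f2"
  define F where "F = (\<lambda>i j k. tprod3 a1 b1 c1 i j k + tprod3 d1 e1 f1 i j k)"
  define G where "G = (\<lambda>i j k. tprod3 a2 b2 c2 i j k + tprod3 d2 e2 f2 i j k)"
  have pFG: "p i j k = F i j k * G i j k" for i j k
    by (simp add: p F_def G_def)
  have F: "F (\<not> i) j k = 0 \<or> F i (\<not> j) k = 0 \<or> F i j (\<not> k) = 0" if "F i j k = 0"
    using rank2_zero_neighbour[OF nn(1-6)] that unfolding F_def .
  have G: "G (\<not> i) j k = 0 \<or> G i (\<not> j) k = 0 \<or> G i j (\<not> k) = 0" if "G i j k = 0"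
    using rank2_zero_neighbour[OF nn(7-12)] that unfolding G_def .
  from assms(2) have "F i j k = 0 \<or> G i j k = 0"
    by (simp add: pFG)
  then show ?thesis
  proof
    assume "F i j k = 0"
    from F[OF this] show ?thesis by (elim disjE) (simp_all add: pFG)
  next
    assume "G i j k = 0"
    from G[OF this] show ?thesis by (elim disjE) (simp_all add: pFG)
  qed
qed

lemma pW_notin_RBM32: "pW \<notin> RBM32"
  using RBM32_zero_neighbour[of pW False False False] by (auto simp: pW_def)

lemma pW_in_Delta7: "pW \<in> Delta7"
  by (simp add: Delta7_def pW_def UNIV_bool)

lemma pW_in_M33: "pW \<in> M33"
proof -
  define a where "a = (\<lambda>i::bool. if i then 1/3 else (0::real))"
  define b where "b = (\<lambda>i::bool. if i then 0 else (1::real))"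
  have "nonneg2 a" "nonneg2 b"
    by (simp_all add: nonneg2_def a_def b_def)
  moreover have "pW = (\<lambda>i j k. tprod3 a b b i j k + tprod3 b a b i j k + tprod3 b b a i j k)"
    by (intro ext) (simp add: pW_def tprod3_def a_def b_def)
  ultimately show ?thesis
    unfolding M33_def mem_Collect_eq
    apply (intro conjI[OF pW_in_Delta7])
    apply (rule exI[of _ a], rule exI[of _ b], rule exI[of _ b], rule exI[of _ b],
        rule exI[of _ a], rule exI[of _ b], rule exI[of _ b], rule exI[of _ b], rule exI[of _ a])
    by (intro conjI)
qed

text \<open>The exponents are chosen so that the four monomials are the four terms of the product
  in \<open>w_curve_factorization\<close>, while at \<open>x = 0\<close> only the exponent-zero ones survive, one at
  each of 100, 010, 001.\<close>
definition w_curve :: "real \<Rightarrow> tensor3" where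
  "w_curve x i j k =
     x ^ (of_bool (\<not> i) + of_bool j + of_bool k) +
     x ^ (of_bool i + of_bool (\<not> j) + 4 * of_bool k) +
     x ^ (of_bool i + 4 * of_bool j + of_bool (\<not> k)) +
     x ^ (1 + 3 * of_bool i + 2 * of_bool j + 2 * of_bool k)"

lemma w_curve_nonneg: "0 \<le> x \<Longrightarrow> 0 \<le> w_curve x i j k"
  by (simp add: w_curve_def)

lemma w_curve_mass_pos:
  assumes "0 \<le> x"
  shows "0 < tensor_mass (w_curve x)"
proof -
  have "1 \<le> w_curve x True False False"
    using assms by (simp add: w_curve_def)
  also have "\<dots> \<le> tensor_mass (w_curve x)"
    using assms by (intro tensor_mass_ge_entry w_curve_nonneg)
  finally show ?thesis by simp
qed

lemma w_curve_factorization: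
  assumes "0 < x"
  shows "w_curve x i j k =
    (1 + (if i then x^2 else 1) * (if j then x^3 else 1) * (if k then 1 / x^2 else 1)) *
    ((if i then 1 else x) * (if j then x else 1) * (if k then x else 1) +
     (if i then x^2 else x) * (if j then 1 / x else 1) * (if k then x^4 else 1))"
  using assms by (cases i; cases j; cases k; simp add: w_curve_def field_simps power_add; algebra)

lemma normalize_w_curve_in_RBM32:
  assumes x: "0 < x"
  shows "normalize_tensor (w_curve x) \<in> RBM32"
proof (rule normalize_product_in_RBM32)
  let ?one = "\<lambda>i::bool. 1::real"
  show "w_curve x i j k =
      (tprod3 ?one ?one ?one i j k +
       tprod3 (\<lambda>i. if i then x^2 else 1) (\<lambda>j. if j then x^3 else 1) (\<lambda>k. if k then 1 / x^2 else 1) i j k) *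
      (tprod3 (\<lambda>i. if i then 1 else x) (\<lambda>j. if j then x else 1) (\<lambda>k. if k then x else 1) i j k +
       tprod3 (\<lambda>i. if i then x^2 else x) (\<lambda>j. if j then 1 / x else 1) (\<lambda>k. if k then x^4 else 1) i j k)"
    for i j k
    using w_curve_factorization[OF x] by (simp add: tprod3_def)
  show "0 < tensor_mass (w_curve x)"
    using x by (simp add: w_curve_mass_pos)
qed (use x in \<open>simp_all add: nonneg2_def\<close>)

lemma normalize_w_curve_0: "normalize_tensor (w_curve 0) = pW"
  by (intro ext) (simp add: normalize_tensor_def tensor_mass_def w_curve_def pW_def UNIV_bool)

lemma continuous_on_normalize_w_curve: "continuous_on {0..} (\<lambda>x. normalize_tensor (w_curve x))"
proof -
  have entry: "continuous_on {0..} (\<lambda>x. w_curve x i j k)" for i j k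
    unfolding w_curve_def by (intro continuous_intros)
  have "continuous_on {0..} (\<lambda>x. tensor_mass (w_curve x))"
    unfolding tensor_mass_def by (intro continuous_intros entry)
  with entry have "continuous_on {0..} (\<lambda>x. w_curve x i j k / tensor_mass (w_curve x))" for i j k
    using w_curve_mass_pos by (intro continuous_on_divide) force+
  then show ?thesis
    unfolding normalize_tensor_def by (intro continuous_on_coordinatewise_then_product)
qed

lemma continuous_endpoint_in_closure:
  fixes f :: "real \<Rightarrow> 'a::topological_space"
  assumes "continuous_on {0..} f" and "\<And>x. 0 < x \<Longrightarrow> f x \<in> S"
  shows "f 0 \<in> closure S"
proof (rule Lim_in_closed_set)
  have "(f \<longlongrightarrow> f 0) (at 0 within {0..})"
    using assms(1) by (simp add: continuous_on_def)
  then show "(f \<longlongrightarrow> f 0) (at 0 within {0<..})"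
    by (rule tendsto_within_subset) auto
  show "\<forall>\<^sub>F x in at 0 within {0<..}. f x \<in> closure S"
    unfolding eventually_at_filter using assms(2) closure_subset
    by (intro always_eventually) blast
qed simp_all

lemma pW_in_closure_RBM32: "pW \<in> closure RBM32"
  using continuous_endpoint_in_closure[OF continuous_on_normalize_w_curve normalize_w_curve_in_RBM32]
  by (simp add: normalize_w_curve_0)

lemma not_closedin_if_missing_limit:
  assumes "p \<in> T" "p \<in> closure S" "p \<notin> S"
  shows "\<not> closedin (top_of_set T) S"
proof
  assume "closedin (top_of_set T) S"
  then obtain C where C: "closed C" "S = T \<inter> C"
    by (auto simp: closedin_closed)
  then have "closure S \<subseteq> C"
    by (intro closure_minimal) auto
  with assms(1,2) have "p \<in> T \<inter> C"
    by blast
  with assms(3) C(2) show False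
    by simp
qed

theorem mainTheorem9:
  shows "pW \<in> Delta7 \<and> pW \<in> M33 \<and> pW \<in> closure RBM32 \<and> pW \<notin> RBM32
         \<and> \<not> closedin (top_of_set Delta7) RBM32"
  using pW_in_Delta7 pW_in_M33 pW_in_closure_RBM32 pW_notin_RBM32
  by (intro conjI not_closedin_if_missing_limit)

end
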